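(* Let $\lambda_1\ge0$ and $\lambda_2=0$, let $P_n$ be the monic polynomials orthogonal with respect to $\langle f,g\rangle_F=\int_{\mathbb R}fg\,e^{-x^4}dx$ and $Q_n$ the monic polynomials orthogonal with respect to $\langle f,g\rangle_S=\int_{\mathbb R}fg\,e^{-x^4}dx+\lambda_1f(0)g(0)$. Then $$\lim_{n\to\infty}\frac{P_n(\sqrt[4]{n}\,x)}{Q_n(\sqrt[4]{n}\,x)}=\sqrt[4]{12}\,\frac{x\,\varphi\big(\sqrt[4]{3/4}\,x\big)}{1+\varphi^2\big(\sqrt[4]{3/4}\,x\big)}$$ uniformly on compact subsets of $\mathbb C\setminus[-\sqrt[4]{4/3},\sqrt[4]{4/3}]$.
   Context: $\varphi(z)=z+\sqrt{z^2-1}$, with the branch of the square root chosen so that $\sqrt{z^2-1}>0$ for $z>1$; i.e. $\varphi$ is the conformal map of $\mathbb C\setminus[-1,1]$ onto the exterior of the closed unit disk. *)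

theory Defs
  imports "HOL-Analysis.Analysis" "HOL-Computational_Algebra.Polynomial"
begin

text \<open>Conformal map of C minus [-1,1] onto the exterior of the closed unit disk:
  phi z = z + sqrt(z^2-1), with the branch sqrt(z^2-1) = sqrt(z-1) sqrt(z+1)
  (principal square roots), which is analytic off [-1,1] and positive for z > 1.\<close>
definition phi :: "complex \<Rightarrow> complex" where
  "phi z = z + csqrt (z - 1) * csqrt (z + 1)"

definition freud_ip :: "real poly \<Rightarrow> real poly \<Rightarrow> real" where
  "freud_ip f g = integral\<^sup>L lborel (\<lambda>x. poly f x * poly g x * exp (- (x ^ 4)))"

definition sob_ip :: "real \<Rightarrow> real poly \<Rightarrow> real poly \<Rightarrow> real" where
  "sob_ip lam1 f g = freud_ip f g + lam1 * poly f 0 * poly g 0"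

definition monic_orthogonal_sequence ::
    "(real poly \<Rightarrow> real poly \<Rightarrow> real) \<Rightarrow> (nat \<Rightarrow> real poly) \<Rightarrow> bool" where
  "monic_orthogonal_sequence ip P \<longleftrightarrow>
     (\<forall>n. degree (P n) = n \<and> lead_coeff (P n) = 1 \<and>
          (\<forall>q. degree q < n \<longrightarrow> ip (P n) q = 0))"

end

theory Submission
  imports Defs "HOL-Probability.Probability" "HOL-Real_Asymp.Real_Asymp"
begin

text \<open>
  Since phi inverts the Joukowski map, the limit function is identically 1, so the claim is that
  P_n / Q_n tends to 1 at the points y = n^(1/4) x. The point mass at 0 does not see polynomials
  vanishing there, so Q_n = P_n for odd n, while for even n one finds
  Q_n(y) = P_n(y) + D_n P_(n-1)(y) / y with 0 <= D_n <= b_(n-1) P_(n-2)(0)^2 / (h_(n-2) K_(n-2)),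
  where b_n are the recurrence coefficients, h_n = ||P_n||^2 and K_k = K_k(0,0) is the
  Christoffel-Darboux kernel; the last factor tends to 0 because consecutive terms of the kernel
  have ratio tending to 1. Freud's equation 4 b_n (b_(n-1) + b_n + b_(n+1)) = n forces
  b_n ~ sqrt(n/12), hence D_n = o(sqrt n). Finally the three-term recurrence bounds
  |P_(n-1)(y) / P_n(y)| / |y| by O(1/sqrt n) uniformly for x in a compact set off
  [-(4/3)^(1/4), (4/3)^(1/4)]: either Im y is large, or |y|^2 dominates 4 max_(k<n) b_k.
\<close>

section \<open>The Freud functional\<close>

definition freud_functional :: "real poly \<Rightarrow> real" where
  "freud_functional p = integral\<^sup>L lborel (\<lambda>x. poly p x * exp (- (x ^ 4)))"

lemma integrable_monomial_freud_weight:
  "integrable lborel (\<lambda>x::real. x ^ k * exp (- (x ^ 4)))"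
proof (rule Bochner_Integration.integrable_bound)
  let ?C = "sqrt (2 * pi) * exp (1/2)"
  show "integrable lborel (\<lambda>x. ?C * (std_normal_density x * \<bar>x\<bar> ^ k))"
    by (intro integrable_mult_right integrable_std_normal_moment_abs)
  show "(\<lambda>x::real. x ^ k * exp (- (x ^ 4))) \<in> borel_measurable lborel" by measurable
  show "AE x in lborel. norm (x ^ k * exp (- (x ^ 4))) \<le> norm (?C * (std_normal_density x * \<bar>x\<bar> ^ k))"
  proof (rule AE_I2)
    fix x :: real
    have "- (x ^ 4) \<le> 1/2 - x\<^sup>2 / 2"
      using sum_squares_ge_zero[of "x\<^sup>2 - 1/4" 0]
      by (simp add: power2_eq_square power4_eq_xxxx algebra_simps)
    then have "exp (- (x ^ 4)) \<le> exp (1/2) * exp (- x\<^sup>2 / 2)"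
      by (simp add: exp_add[symmetric])
    then have "\<bar>x\<bar> ^ k * exp (- (x ^ 4)) \<le> \<bar>x\<bar> ^ k * (exp (1/2) * exp (- x\<^sup>2 / 2))"
      by (intro mult_left_mono) auto
    also have "\<dots> = ?C * (std_normal_density x * \<bar>x\<bar> ^ k)"
      by (simp add: std_normal_density_def real_sqrt_mult)
    finally show "norm (x ^ k * exp (- (x ^ 4))) \<le> norm (?C * (std_normal_density x * \<bar>x\<bar> ^ k))"
      by (simp add: abs_mult power_abs)
  qed
qed

lemma poly_freud_weight_eq_sum:
  "(\<lambda>x::real. poly p x * exp (- (x ^ 4))) = (\<lambda>x. \<Sum>i\<le>degree p. coeff p i * (x ^ i * exp (- (x ^ 4))))"
  by (auto simp: poly_altdef sum_distrib_right mult.assoc)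

lemma integrable_poly_freud_weight:
  "integrable lborel (\<lambda>x::real. poly p x * exp (- (x ^ 4)))"
  unfolding poly_freud_weight_eq_sum
  by (intro Bochner_Integration.integrable_sum integrable_mult_right integrable_monomial_freud_weight)

lemma freud_functional_0 [simp]: "freud_functional 0 = 0"
  unfolding freud_functional_def by simp

lemma freud_functional_add: "freud_functional (p + q) = freud_functional p + freud_functional q"
  unfolding freud_functional_def by (simp add: distrib_right integrable_poly_freud_weight)

lemma freud_functional_diff: "freud_functional (p - q) = freud_functional p - freud_functional q"
  unfolding freud_functional_def by (simp add: left_diff_distrib integrable_poly_freud_weight)

lemma freud_functional_smult: "freud_functional (smult c p) = c * freud_functional p"
  unfolding freud_functional_def by (simp add: mult.assoc)

lemma freud_ip_eq_functional: "freud_ip f g = freud_functional (f * g)"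
  unfolding freud_ip_def freud_functional_def by simp

lemma freud_functional_reflect: "freud_functional (pcompose p [:0, -1:]) = freud_functional p"
  unfolding freud_functional_def
  by (subst lborel_integral_real_affine[where c="-1" and t=0]) (simp_all add: poly_pcompose)

lemma freud_functional_odd:
  assumes "\<And>x. poly p (- x) = - poly p x"
  shows "freud_functional p = 0"
proof -
  have "pcompose p [:0, -1:] = - p"
    by (simp add: poly_eq_poly_eq_iff[symmetric] fun_eq_iff poly_pcompose assms)
  then have "freud_functional p = - freud_functional p"
    using freud_functional_reflect[of p] by (simp add: freud_functional_def)
  then show ?thesis by simp
qed

lemma freud_functional_square_pos:
  assumes "p \<noteq> 0"
  shows "freud_functional (p * p) > 0"
proof -
  let ?f = "\<lambda>x. poly (p * p) x * exp (- (x ^ 4))"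
  have nonneg: "AE x in lborel. 0 \<le> ?f x" by (intro AE_I2) simp
  have "freud_functional (p * p) \<noteq> 0"
  proof
    assume "freud_functional (p * p) = 0"
    then have "AE x in lborel. ?f x = 0"
      unfolding freud_functional_def
      using integral_nonneg_eq_0_iff_AE[OF integrable_poly_freud_weight nonneg] by simp
    moreover have "AE x in lborel. x \<notin> {x. poly p x = 0}"
      by (intro AE_not_in finite_imp_null_set_lborel poly_roots_finite assms)
    ultimately have "AE x::real in lborel. False"
      by eventually_elim simp
    then show False by (simp add: trivial_limit_def[symmetric] ae_filter_eq_bot_iff)
  qed
  moreover have "freud_functional (p * p) \<ge> 0"
    unfolding freud_functional_def by (intro integral_nonneg_AE nonneg)
  ultimately show ?thesis by simp
qed

lemma poly_freud_weight_tendsto_at_top: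
  "((\<lambda>x::real. poly p x * exp (- (x ^ 4))) \<longlongrightarrow> 0) at_top"
  unfolding poly_freud_weight_eq_sum
  by (intro tendsto_null_sum tendsto_mult_right_zero) real_asymp

lemma poly_freud_weight_tendsto_at_bot:
  "((\<lambda>x::real. poly p x * exp (- (x ^ 4))) \<longlongrightarrow> 0) at_bot"
  unfolding poly_freud_weight_eq_sum
  by (intro tendsto_null_sum tendsto_mult_right_zero) real_asymp

text \<open>Integration by parts against the weight, whose logarithmic derivative is \<open>-4x\<^sup>3\<close>.\<close>
lemma freud_functional_pderiv: "freud_functional (pderiv p) = freud_functional (monom 4 3 * p)"
proof -
  let ?q = "pderiv p - monom 4 3 * p"
  let ?F = "\<lambda>x::real. poly p x * exp (- (x ^ 4))"
  have "(LBINT x=-\<infinity>..\<infinity>. poly ?q x * exp (- (x ^ 4))) = 0 - 0"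
  proof (rule interval_integral_FTC_integrable[where F = ?F])
    fix x :: real
    have "((\<lambda>x::real. exp (- (x ^ 4))) has_real_derivative exp (- (x ^ 4)) * (- (4 * x ^ 3))) (at x)"
      by (auto intro!: derivative_eq_intros)
    from DERIV_mult[OF poly_DERIV this]
    show "(?F has_vector_derivative poly ?q x * exp (- (x ^ 4))) (at x)"
      by (simp add: poly_monom algebra_simps has_real_derivative_iff_has_vector_derivative)
    show "isCont (\<lambda>x. poly ?q x * exp (- (x ^ 4))) x" by (intro continuous_intros)
  next
    show "set_integrable lborel (einterval (-\<infinity>) \<infinity>) (\<lambda>x. poly ?q x * exp (- (x ^ 4)))"
      using integrable_poly_freud_weight[of ?q] by (simp add: set_integrable_def)
    show "((?F \<circ> real_of_ereal) \<longlongrightarrow> 0) (at_right (-\<infinity>))"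
      unfolding ereal_tendsto_simps by (rule poly_freud_weight_tendsto_at_bot)
    show "((?F \<circ> real_of_ereal) \<longlongrightarrow> 0) (at_left \<infinity>)"
      unfolding ereal_tendsto_simps by (rule poly_freud_weight_tendsto_at_top)
  qed simp
  then have "freud_functional ?q = 0"
    by (simp add: freud_functional_def interval_lebesgue_integral_def set_lebesgue_integral_def)
  then show ?thesis by (simp add: freud_functional_diff)
qed


section \<open>Sequences satisfying Freud's equation\<close>

locale freud_sequence =
  fixes b :: "nat \<Rightarrow> real"
  assumes nonneg: "b n \<ge> 0"
    and eq: "n \<ge> 1 \<Longrightarrow> 4 * b n * (b (n - 1) + b n + b (Suc n)) = real n"
begin

lemma upper_step:
  assumes n: "n \<ge> 2" and "0 \<le> lo" "0 \<le> hi" and left: "lo \<le> b (n - 1) / sqrt (real (n - 1))"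
    and mid: "hi \<le> b n / sqrt (real n)" and right: "lo \<le> b (Suc n) / sqrt (real (Suc n))"
  shows "4 * hi * (lo * (sqrt (real (n - 1)) / sqrt (real n)) + hi + lo) \<le> 1"
proof -
  let ?r = "sqrt (real n)" and ?r1 = "sqrt (real (n - 1))"
  have r: "?r > 0" using n by simp
  have "lo * ?r1 \<le> b (n - 1)" using left n by (simp add: field_simps of_nat_diff)
  moreover have "hi * ?r \<le> b n" using mid r by (simp add: field_simps)
  moreover have "lo * ?r \<le> b (Suc n)"
    using right \<open>0 \<le> lo\<close> order_trans[of "lo * ?r" "lo * sqrt (real (Suc n))"]
    by (simp add: field_simps mult_left_mono)
  ultimately have bound: "4 * (hi * ?r) * (lo * ?r1 + hi * ?r + lo * ?r) \<le> 4 * b n * (b (n - 1) + b n + b (Suc n))"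
    using \<open>0 \<le> lo\<close> \<open>0 \<le> hi\<close> r by (intro mult_mono add_mono) (auto intro: order_trans[of 0 "hi * ?r"])
  have "?r * ?r * (4 * hi * (lo * (?r1 / ?r) + hi + lo)) = 4 * (hi * ?r) * (lo * ?r1 + hi * ?r + lo * ?r)"
    using r by (simp add: field_simps del: real_sqrt_mult_self)
  also note bound
  also have "4 * b n * (b (n - 1) + b n + b (Suc n)) = ?r * ?r * 1" using eq[of n] n by simp
  finally show ?thesis using r by (simp add: mult_le_cancel_left_pos)
qed

lemma lower_step:
  assumes n: "n \<ge> 2" and "0 \<le> hi" and left: "b (n - 1) / sqrt (real (n - 1)) \<le> hi"
    and mid: "b n / sqrt (real n) \<le> lo" and right: "b (Suc n) / sqrt (real (Suc n)) \<le> hi"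
  shows "1 \<le> 4 * lo * (hi + lo + hi * (sqrt (real (Suc n)) / sqrt (real n)))"
proof -
  let ?r = "sqrt (real n)" and ?r2 = "sqrt (real (Suc n))"
  have r: "?r > 0" using n by simp
  have "b (n - 1) \<le> hi * sqrt (real (n - 1))" using left n by (simp add: field_simps of_nat_diff)
  also have "\<dots> \<le> hi * ?r" using \<open>0 \<le> hi\<close> by (intro mult_left_mono) auto
  finally have "b (n - 1) \<le> hi * ?r" .
  moreover have "b n \<le> lo * ?r" using mid r by (simp add: field_simps)
  moreover have "b (Suc n) \<le> hi * ?r2" using right by (simp add: field_simps)
  ultimately have bound: "4 * b n * (b (n - 1) + b n + b (Suc n)) \<le> 4 * (lo * ?r) * (hi * ?r + lo * ?r + hi * ?r2)"
    using nonneg[of n] nonneg[of "n - 1"] nonneg[of "Suc n"]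
    by (intro mult_mono add_mono) (auto intro: order_trans[of 0 "b n"])
  have "?r * ?r * 1 = 4 * b n * (b (n - 1) + b n + b (Suc n))" using eq[of n] n by simp
  also note bound
  also have "4 * (lo * ?r) * (hi * ?r + lo * ?r + hi * ?r2) = ?r * ?r * (4 * lo * (hi + lo + hi * (?r2 / ?r)))"
    using r by (simp add: field_simps del: real_sqrt_mult_self)
  finally show ?thesis using r by (simp add: mult_le_cancel_left_pos)
qed

lemma frequently_upper:
  assumes lo: "0 \<le> lo" "eventually (\<lambda>n. lo \<le> b n / sqrt (real n)) sequentially"
    and hi: "0 \<le> hi" "frequently (\<lambda>n. hi \<le> b n / sqrt (real n)) sequentially"
  shows "4 * hi * (2 * lo + hi) \<le> 1"
proof (rule ccontr)
  define f where "f n = 4 * hi * (lo * (sqrt (real (n - 1)) / sqrt (real n)) + hi + lo)" for n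
  assume "\<not> ?thesis"
  moreover have "f \<longlonglongrightarrow> 4 * hi * (lo * 1 + hi + lo)"
    unfolding f_def by (intro tendsto_intros) real_asymp
  ultimately have "eventually (\<lambda>n. 1 < f n) sequentially"
    by (intro order_tendstoD(1)) (auto simp: algebra_simps)
  moreover obtain N where N: "\<And>n. n \<ge> N \<Longrightarrow> lo \<le> b n / sqrt (real n)"
    using lo(2) by (auto simp: eventually_sequentially)
  ultimately have "eventually (\<lambda>n. 1 < f n \<and> n \<ge> N + 2) sequentially"
    by (auto intro: eventually_conj eventually_ge_at_top)
  then obtain n where n: "1 < f n" "n \<ge> N + 2" "hi \<le> b n / sqrt (real n)"
    using frequently_eventually_frequently[OF hi(2)] by (auto dest: frequently_ex)
  have "f n \<le> 1"
    unfolding f_def using n N[of "n - 1"] N[of "Suc n"]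
    by (intro upper_step lo(1) hi(1)) auto
  with n show False by simp
qed

lemma frequently_lower:
  assumes hi: "0 \<le> hi" "eventually (\<lambda>n. b n / sqrt (real n) \<le> hi) sequentially"
    and lo: "0 \<le> lo" "frequently (\<lambda>n. b n / sqrt (real n) \<le> lo) sequentially"
  shows "1 \<le> 4 * lo * (2 * hi + lo)"
proof (rule ccontr)
  define f where "f n = 4 * lo * (hi + lo + hi * (sqrt (real (Suc n)) / sqrt (real n)))" for n
  assume "\<not> ?thesis"
  moreover have "f \<longlonglongrightarrow> 4 * lo * (hi + lo + hi * 1)"
    unfolding f_def by (intro tendsto_intros) real_asymp
  ultimately have "eventually (\<lambda>n. f n < 1) sequentially"
    by (intro order_tendstoD(2)) (auto simp: algebra_simps)
  moreover obtain N where N: "\<And>n. n \<ge> N \<Longrightarrow> b n / sqrt (real n) \<le> hi"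
    using hi(2) by (auto simp: eventually_sequentially)
  ultimately have "eventually (\<lambda>n. f n < 1 \<and> n \<ge> N + 2) sequentially"
    by (auto intro: eventually_conj eventually_ge_at_top)
  then obtain n where n: "f n < 1" "n \<ge> N + 2" "b n / sqrt (real n) \<le> lo"
    using frequently_eventually_frequently[OF lo(2)] by (auto dest: frequently_ex)
  have "1 \<le> f n"
    unfolding f_def using n N[of "n - 1"] N[of "Suc n"]
    by (intro lower_step hi(1)) auto
  with n show False by simp
qed

lemma le_half_sqrt:
  assumes n: "n \<ge> 1"
  shows "b n \<le> sqrt (real n) / 2"
proof -
  have "4 * b n * b n \<le> 4 * b n * (b (n - 1) + b n + b (Suc n))"
    using nonneg[of n] nonneg[of "n - 1"] nonneg[of "Suc n"] by (intro mult_left_mono) auto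
  with eq[OF n] have "(2 * b n)\<^sup>2 \<le> real n" by (simp add: power2_eq_square)
  then show ?thesis using nonneg[of n] real_le_rsqrt by fastforce
qed

lemma Limsup_le:
  assumes l: "Liminf sequentially (\<lambda>n. ereal (b n / sqrt (real n))) = ereal l"
    and L: "Limsup sequentially (\<lambda>n. ereal (b n / sqrt (real n))) = ereal L"
    and "0 \<le> l" "l \<le> L"
  shows "4 * L * (2 * l + L) \<le> 1"
proof -
  define g where "g e = 4 * max 0 (L - e) * (2 * max 0 (l - e) + max 0 (L - e))" for e
  have "g e \<le> 1" if "e > 0" for e
    unfolding g_def
  proof (rule frequently_upper)
    have "eventually (\<lambda>n. l - e < b n / sqrt (real n)) sequentially"
      using less_LiminfD[of "ereal (l - e)" sequentially "\<lambda>n. ereal (b n / sqrt (real n))"] that by (simp add: l)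
    then show "eventually (\<lambda>n. max 0 (l - e) \<le> b n / sqrt (real n)) sequentially"
      by eventually_elim (simp add: nonneg)
    have "\<not> eventually (\<lambda>n. b n / sqrt (real n) \<le> L - e) sequentially"
      using Limsup_bounded[of "\<lambda>n. ereal (b n / sqrt (real n))" "ereal (L - e)" sequentially] that by (auto simp: L)
    then show "frequently (\<lambda>n. max 0 (L - e) \<le> b n / sqrt (real n)) sequentially"
      by (auto simp: not_eventually nonneg elim: frequently_elim1)
  qed simp_all
  moreover have "(g \<longlongrightarrow> g 0) (at_right 0)" unfolding g_def by (intro tendsto_intros)
  ultimately have "g 0 \<le> 1"
    by (intro tendsto_upperbound[of g]) (auto simp: eventually_at_right_field intro!: exI[of _ 1])
  with \<open>0 \<le> l\<close> \<open>l \<le> L\<close> show ?thesis by (simp add: g_def)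
qed

lemma Liminf_ge:
  assumes l: "Liminf sequentially (\<lambda>n. ereal (b n / sqrt (real n))) = ereal l"
    and L: "Limsup sequentially (\<lambda>n. ereal (b n / sqrt (real n))) = ereal L"
    and "0 \<le> l" "l \<le> L"
  shows "1 \<le> 4 * l * (2 * L + l)"
proof -
  define g where "g e = 4 * (l + e) * (2 * (L + e) + (l + e))" for e
  have "1 \<le> g e" if "e > 0" for e
    unfolding g_def
  proof (rule frequently_lower)
    have "eventually (\<lambda>n. b n / sqrt (real n) < L + e) sequentially"
      using Limsup_lessD[of sequentially "\<lambda>n. ereal (b n / sqrt (real n))" "ereal (L + e)"] that by (simp add: L)
    then show "eventually (\<lambda>n. b n / sqrt (real n) \<le> L + e) sequentially"
      by eventually_elim simp
    have "\<not> eventually (\<lambda>n. l + e \<le> b n / sqrt (real n)) sequentially"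
      using Liminf_bounded[of "ereal (l + e)" "\<lambda>n. ereal (b n / sqrt (real n))" sequentially] that by (auto simp: l)
    then show "frequently (\<lambda>n. b n / sqrt (real n) \<le> l + e) sequentially"
      by (auto simp: not_eventually elim: frequently_elim1)
  qed (use that \<open>0 \<le> l\<close> \<open>l \<le> L\<close> in simp_all)
  moreover have "(g \<longlongrightarrow> g 0) (at_right 0)" unfolding g_def by (intro tendsto_intros)
  ultimately have "1 \<le> g 0"
    by (intro tendsto_lowerbound[of g]) (auto simp: eventually_at_right_field intro!: exI[of _ 1])
  then show ?thesis by (simp add: g_def)
qed

text \<open>Freud's conjecture for the weight \<open>e\<^sup>-\<^sup>x\<^sup>4\<close>: comparing \<open>limsup\<close> and \<open>liminf\<close> of
  \<open>b\<^sub>n / \<surd>n\<close> in the equation forces them to coincide.\<close>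
lemma limit:
  shows "(\<lambda>n. b n / sqrt (real n)) \<longlonglongrightarrow> 1 / sqrt 12"
proof -
  define s where "s = (\<lambda>n. ereal (b n / sqrt (real n)))"
  have "s n \<le> ereal (1/2)" for n
    using le_half_sqrt[of n] nonneg[of n]
    by (cases "n = 0") (simp_all add: s_def field_simps)
  then have "Limsup sequentially s \<le> ereal (1/2)"
    by (intro Limsup_bounded always_eventually) auto
  moreover have "0 \<le> Liminf sequentially s"
    by (rule Liminf_bounded) (simp add: s_def nonneg)
  moreover have "Liminf sequentially s \<le> Limsup sequentially s"
    by (rule Liminf_le_Limsup) simp
  ultimately obtain l L where L: "Limsup sequentially s = ereal L"
    and l: "Liminf sequentially s = ereal l" and "0 \<le> l" "l \<le> L"
    by (cases "Limsup sequentially s"; cases "Liminf sequentially s") auto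
  have upper: "4 * L * (2 * l + L) \<le> 1" and lower: "1 \<le> 4 * l * (2 * L + l)"
    using Limsup_le[of l L] Liminf_ge[of l L] l L \<open>0 \<le> l\<close> \<open>l \<le> L\<close> by (simp_all add: s_def)
  then have "L * L \<le> l * l" by (simp add: algebra_simps)
  then have "L \<le> l"
    using \<open>0 \<le> l\<close> power2_le_imp_le[of L l] by (simp add: power2_eq_square)
  with \<open>l \<le> L\<close> have "l = L" by simp
  with upper lower have "L * L = 1 / 12" by (simp add: algebra_simps)
  have "L = sqrt (L * L)" using \<open>0 \<le> l\<close> \<open>l = L\<close> by simp
  also have "\<dots> = 1 / sqrt 12" unfolding \<open>L * L = 1 / 12\<close> by (simp add: real_sqrt_divide)
  finally have "L = 1 / sqrt 12" .
  have "s \<longlonglongrightarrow> ereal L"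
    by (rule Liminf_eq_Limsup) (simp_all add: L l \<open>l = L\<close>)
  with \<open>L = 1 / sqrt 12\<close> show ?thesis by (simp add: s_def)
qed

end


lemma ratio_Suc_tendsto_1_if_sqrt_asymptotic:
  fixes b :: "nat \<Rightarrow> real"
  assumes lim: "(\<lambda>n. b n / sqrt (real n)) \<longlonglongrightarrow> c" and c: "c > 0"
  shows "(\<lambda>n. b n / b (Suc n)) \<longlonglongrightarrow> 1"
proof -
  have "(\<lambda>n. (b n / sqrt (real n)) / (b (Suc n) / sqrt (real (Suc n)))
      * (sqrt (real n) / sqrt (real (Suc n)))) \<longlonglongrightarrow> c / c * 1"
    by (intro tendsto_intros lim LIMSEQ_Suc[OF lim]) (use c in \<open>simp_all, real_asymp\<close>)
  moreover have "eventually (\<lambda>n. (b n / sqrt (real n)) / (b (Suc n) / sqrt (real (Suc n)))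
      * (sqrt (real n) / sqrt (real (Suc n))) = b n / b (Suc n)) sequentially"
    using eventually_gt_at_top[of 0] by eventually_elim (simp add: field_simps)
  ultimately show ?thesis using c by (simp add: tendsto_cong)
qed

lemma one_minus_inverse_power_ge_half: "1/2 \<le> (1 - 1 / (2 * real M + 2)) ^ M"
proof -
  have "1 + real M * (- 1 / (2 * real M + 2)) \<le> (1 + (- 1 / (2 * real M + 2))) ^ M"
    by (rule Bernoulli_inequality) (simp add: field_simps)
  moreover have "1/2 \<le> 1 + real M * (- 1 / (2 * real M + 2))" by (simp add: field_simps)
  ultimately have "1/2 \<le> (1 + (- 1 / (2 * real M + 2))) ^ M" by linarith
  then show ?thesis by simp
qed

lemma iterated_ratio_bound:
  fixes v :: "nat \<Rightarrow> real"
  assumes step: "\<And>i. i \<ge> N \<Longrightarrow> \<rho> * v (Suc i) \<le> v i" and "0 \<le> \<rho>" and "i \<ge> N"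
  shows "\<rho> ^ d * v (i + d) \<le> v i"
  using \<open>i \<ge> N\<close>
proof (induction d arbitrary: i)
  case (Suc d)
  have "\<rho> ^ Suc d * v (i + Suc d) = \<rho> * (\<rho> ^ d * v (Suc i + d))" by simp
  also have "\<dots> \<le> \<rho> * v (Suc i)"
    using Suc.IH[of "Suc i"] Suc.prems \<open>0 \<le> \<rho>\<close> by (intro mult_left_mono) auto
  also have "\<dots> \<le> v i" by (rule step[OF Suc.prems])
  finally show ?case .
qed simp

text \<open>If consecutive ratios tend to \<open>1\<close>, the last \<open>M\<close> terms of a partial sum are all at least half
  the last term, for any fixed \<open>M\<close>.\<close>
lemma last_term_over_partial_sum_tendsto_0:
  fixes v :: "nat \<Rightarrow> real"
  assumes pos: "\<And>i. v i > 0" and ratio: "(\<lambda>i. v (Suc i) / v i) \<longlonglongrightarrow> 1"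
  shows "(\<lambda>m. v m / (\<Sum>i\<le>m. v i)) \<longlonglongrightarrow> 0"
proof (rule LIMSEQ_I)
  fix e :: real assume e: "e > 0"
  define M where "M = nat \<lceil>2 / e\<rceil>"
  define \<rho> where "\<rho> = 1 - 1 / (2 * real M + 2)"
  have \<rho>: "0 < \<rho>" "\<rho> \<le> 1" by (auto simp: \<rho>_def field_simps)
  have "eventually (\<lambda>i. v (Suc i) / v i < 1 / \<rho>) sequentially"
    by (rule order_tendstoD(2)[OF ratio]) (use \<rho> in \<open>simp add: \<rho>_def field_simps\<close>)
  then obtain N where N: "\<And>i. i \<ge> N \<Longrightarrow> \<rho> * v (Suc i) \<le> v i"
    using pos \<rho> by (force simp: eventually_sequentially field_simps)
  show "\<exists>m0. \<forall>m\<ge>m0. norm (v m / (\<Sum>i\<le>m. v i) - 0) < e"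
  proof (intro exI allI impI)
    fix m assume m: "m \<ge> N + M"
    have "v m / 2 \<le> v i" if "i \<in> {m - M..m}" for i
    proof -
      have "1/2 \<le> \<rho> ^ M" using one_minus_inverse_power_ge_half[of M] by (simp add: \<rho>_def)
      also have "\<dots> \<le> \<rho> ^ (m - i)" using that \<rho> by (intro power_decreasing) auto
      finally have "1/2 * v m \<le> \<rho> ^ (m - i) * v (i + (m - i))"
        using pos[of m] that by (simp add: mult_right_mono)
      also have "\<dots> \<le> v i"
        using that m \<rho> N by (intro iterated_ratio_bound[where N = N and \<rho> = \<rho> and v = v]) auto
      finally show ?thesis by simp
    qed
    then have "real (card {m - M..m}) * (v m / 2) \<le> (\<Sum>i\<in>{m - M..m}. v i)"
      by (rule sum_bounded_below)
    also have "\<dots> \<le> (\<Sum>i\<le>m. v i)" by (rule sum_mono2) (auto intro: less_imp_le pos)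
    finally have "(real M + 1) * (v m / 2) \<le> (\<Sum>i\<le>m. v i)" using m by (simp add: add.commute)
    moreover have "(\<Sum>i\<le>m. v i) > 0" by (intro sum_pos pos) auto
    ultimately have "v m / (\<Sum>i\<le>m. v i) \<le> 2 / (real M + 1)"
      by (simp add: field_simps)
    also have "\<dots> < e"
    proof -
      have "2 / e < real M + 1" unfolding M_def by linarith
      then show ?thesis using e by (simp add: field_simps)
    qed
    finally show "norm (v m / (\<Sum>i\<le>m. v i) - 0) < e"
      using pos by (simp add: sum_nonneg less_imp_le)
  qed
qed

lemma eventually_all_less_le_sqrt:
  fixes b :: "nat \<Rightarrow> real"
  assumes lim: "(\<lambda>n. b n / sqrt (real n)) \<longlonglongrightarrow> c" and nonneg: "\<And>n. b n \<ge> 0" and "c' > c"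
  shows "eventually (\<lambda>n. \<forall>k<n. b k \<le> c' * sqrt (real n)) sequentially"
proof -
  have "0 \<le> c" by (rule tendsto_lowerbound[OF lim]) (simp_all add: nonneg)
  with \<open>c' > c\<close> have "c' > 0" by simp
  obtain N0 where N0: "\<And>k. k \<ge> N0 \<Longrightarrow> b k / sqrt (real k) < c'"
    using order_tendstoD(2)[OF lim \<open>c' > c\<close>] by (auto simp: eventually_sequentially)
  define B where "B = (\<Sum>k\<le>N0. b k)"
  have bound: "b k \<le> c' * sqrt (real n)" if n: "n \<ge> max (Suc N0) (nat \<lceil>(B / c')\<^sup>2\<rceil>)" and "k < n" for n k
  proof (cases "k \<ge> N0 \<and> k > 0")
    case True
    then have "b k < c' * sqrt (real k)" using N0[of k] by (simp add: field_simps)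
    also have "\<dots> \<le> c' * sqrt (real n)" using \<open>k < n\<close> \<open>c' > 0\<close> by (intro mult_left_mono) auto
    finally show ?thesis by simp
  next
    case False
    have "b k \<le> B" unfolding B_def using False nonneg by (intro member_le_sum) auto
    also have "B / c' \<le> sqrt (real n)"
      using n by (intro real_le_rsqrt) linarith
    then have "B \<le> c' * sqrt (real n)" using \<open>c' > 0\<close> by (simp add: field_simps)
    finally show ?thesis .
  qed
  show ?thesis
    by (intro eventually_sequentiallyI[of "max (Suc N0) (nat \<lceil>(B / c')\<^sup>2\<rceil>)"] allI impI bound)
qed


section \<open>Estimates in the complex plane\<close>

lemma norm_inverse_le_inverse_abs_Im:
  assumes "Im w \<noteq> 0"
  shows "cmod (inverse w) \<le> 1 / \<bar>Im w\<bar>"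
proof -
  have "1 / cmod w \<le> 1 / \<bar>Im w\<bar>"
    using assms abs_Im_le_cmod[of w] by (intro divide_left_mono) (auto intro!: mult_pos_pos)
  then show ?thesis by (simp add: norm_inverse divide_inverse)
qed

lemma Im_mult_Im_inverse_nonpos: "Im w * Im (inverse w) \<le> 0"
  by (simp add: divide_nonpos_nonneg mult_nonneg_nonpos power2_eq_square)

text \<open>The invariant is that \<open>p\<^sub>k / p\<^sub>k\<^sub>+\<^sub>1\<close> lies in the closed half plane opposite to \<open>y\<close>; the map
  \<open>r \<mapsto> 1 / (y - b r)\<close> preserves it because \<open>b \<ge> 0\<close>.\<close>
lemma three_term_ratio_bound_half_plane:
  fixes p :: "nat \<Rightarrow> complex" and b :: "nat \<Rightarrow> real"
  assumes p0: "p 0 = 1" and p1: "p 1 = y"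
    and rec: "\<And>k. p (Suc (Suc k)) = y * p (Suc k) - of_real (b (Suc k)) * p k"
    and nonneg: "\<And>k. b k \<ge> 0" and Im_y: "Im y \<noteq> 0"
  shows "p (Suc k) \<noteq> 0 \<and> cmod (p k / p (Suc k)) \<le> 1 / \<bar>Im y\<bar> \<and> Im y * Im (p k / p (Suc k)) \<le> 0"
proof (induction k)
  case 0
  have "y \<noteq> 0" using Im_y by auto
  then show ?case
    using norm_inverse_le_inverse_abs_Im[OF Im_y] Im_mult_Im_inverse_nonpos[of y] p0 p1
    by (simp add: divide_inverse)
next
  case (Suc k)
  define r where "r = p k / p (Suc k)"
  define z where "z = y - of_real (b (Suc k)) * r"
  have pz: "p (Suc (Suc k)) = p (Suc k) * z"
    using Suc.IH by (simp add: rec z_def r_def algebra_simps)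
  have "Im y * Im z = (Im y)\<^sup>2 - b (Suc k) * (Im y * Im r)"
    by (simp add: z_def algebra_simps power2_eq_square)
  moreover have "b (Suc k) * (Im y * Im r) \<le> 0"
    using Suc.IH nonneg[of "Suc k"] by (simp add: r_def mult_nonneg_nonpos)
  ultimately have yz: "(Im y)\<^sup>2 \<le> Im y * Im z" by simp
  then have "\<bar>Im y\<bar> * \<bar>Im y\<bar> \<le> \<bar>Im y\<bar> * \<bar>Im z\<bar>"
    by (simp add: abs_mult[symmetric] power2_eq_square)
  then have Im_z: "\<bar>Im y\<bar> \<le> \<bar>Im z\<bar>" by (rule mult_left_le_imp_le) (use Im_y in simp)
  then have "Im z \<noteq> 0" using Im_y by auto
  then have z: "z \<noteq> 0" by auto
  have ratio: "p (Suc k) / p (Suc (Suc k)) = inverse z"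
    using Suc.IH z by (simp add: pz divide_inverse)
  have "cmod (inverse z) \<le> 1 / \<bar>Im z\<bar>" by (rule norm_inverse_le_inverse_abs_Im) fact
  also have "\<dots> \<le> 1 / \<bar>Im y\<bar>" using Im_z Im_y by (intro divide_left_mono) auto
  finally have "cmod (p (Suc k) / p (Suc (Suc k))) \<le> 1 / \<bar>Im y\<bar>" using ratio by simp
  moreover have "Im y * Im (inverse z) \<le> 0"
    using Im_mult_Im_inverse_nonpos[of z] yz Im_y
    by (smt (verit) mult_less_0_iff zero_less_mult_iff zero_less_power2)
  ultimately show ?case using ratio Suc.IH z by (simp add: pz)
qed

lemma three_term_ratio_bound_disk:
  fixes p :: "nat \<Rightarrow> complex" and b :: "nat \<Rightarrow> real"
  assumes p0: "p 0 = 1" and p1: "p 1 = y"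
    and rec: "\<And>k. p (Suc (Suc k)) = y * p (Suc k) - of_real (b (Suc k)) * p k"
    and nonneg: "\<And>k. b k \<ge> 0" and y: "y \<noteq> 0" and bounded: "\<And>k. k < n \<Longrightarrow> b k \<le> B"
    and large: "4 * B \<le> (cmod y)\<^sup>2"
  shows "k < n \<Longrightarrow> p (Suc k) \<noteq> 0 \<and> cmod (p k / p (Suc k)) \<le> 2 / cmod y"
proof (induction k)
  case 0
  have "1 / cmod y \<le> 2 / cmod y" using y by (simp add: divide_right_mono)
  then show ?case using p0 p1 y by (simp add: norm_divide)
next
  case (Suc k)
  then have IH: "p (Suc k) \<noteq> 0" "cmod (p k / p (Suc k)) \<le> 2 / cmod y" by auto
  define z where "z = y - of_real (b (Suc k)) * (p k / p (Suc k))"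
  have pz: "p (Suc (Suc k)) = p (Suc k) * z"
    using IH by (simp add: rec z_def algebra_simps)
  have "cmod (of_real (b (Suc k)) * (p k / p (Suc k))) = b (Suc k) * cmod (p k / p (Suc k))"
    using nonneg[of "Suc k"] by (simp add: norm_mult norm_divide)
  also have "\<dots> \<le> B * (2 / cmod y)"
    using IH nonneg[of "Suc k"] bounded[of "Suc k"] Suc.prems by (intro mult_mono) auto
  also have "\<dots> \<le> cmod y / 2"
    using large y by (simp add: field_simps power2_eq_square)
  finally have z: "cmod y / 2 \<le> cmod z"
    using norm_triangle_ineq2[of y "of_real (b (Suc k)) * (p k / p (Suc k))"] by (simp add: z_def)
  with y have "z \<noteq> 0" by auto
  moreover from this z y have "1 / cmod z \<le> 2 / cmod y" by (simp add: field_simps)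
  ultimately show ?case using IH by (simp add: pz norm_divide)
qed

lemma norm_divide_minus_1_le:
  fixes p q e :: complex
  assumes "p \<noteq> 0" "cmod e \<le> 1/2" "q = p * (1 + e)"
  shows "cmod (p / q - 1) \<le> 2 * cmod e"
proof -
  have "1 - cmod e \<le> cmod (1 + e)" using norm_triangle_ineq2[of 1 "- e"] by simp
  then have half: "1/2 \<le> cmod (1 + e)" using assms(2) by simp
  then have "1 + e \<noteq> 0" by auto
  moreover from this assms(1,3) have "q \<noteq> 0" by simp
  ultimately have "p / q - 1 = - e / (1 + e)" using assms(3) by (simp add: field_simps)
  then have "cmod (p / q - 1) = cmod e / cmod (1 + e)" by (simp add: norm_divide)
  also have "\<dots> \<le> cmod e / (1/2)" using half by (intro divide_left_mono) auto
  finally show ?thesis by simp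
qed

lemma compact_off_segment_bound:
  fixes K :: "complex set"
  assumes "compact K" and "K \<inter> complex_of_real ` {-a..a} = {}" and "a > 0"
  obtains \<delta> where "\<delta> > 0" "\<And>x. x \<in> K \<Longrightarrow> \<delta> / 2 \<le> \<bar>Im x\<bar> \<or> a + \<delta> / 2 \<le> cmod x"
proof -
  have "compact (complex_of_real ` {-a..a})"
    by (intro compact_continuous_image continuous_intros) auto
  then obtain \<delta> where \<delta>: "\<delta> > 0" and far: "\<And>x t. x \<in> K \<Longrightarrow> t \<in> {-a..a} \<Longrightarrow> \<delta> \<le> dist x (complex_of_real t)"
    using separate_compact_closed[OF assms(1) compact_imp_closed assms(2)] by blast
  have "\<delta> / 2 \<le> \<bar>Im x\<bar> \<or> a + \<delta> / 2 \<le> cmod x" if "x \<in> K" for x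
  proof (rule ccontr)
    assume "\<not> ?thesis"
    then have Im_x: "\<bar>Im x\<bar> < \<delta> / 2" and norm_x: "cmod x < a + \<delta> / 2" by auto
    have dist_le: "dist x (complex_of_real t) \<le> \<bar>Re x - t\<bar> + \<bar>Im x\<bar>" for t
      using cmod_le[of "x - complex_of_real t"] by (simp add: dist_norm)
    define t where "t = max (-a) (min a (Re x))"
    have "t \<in> {-a..a}" using \<open>a > 0\<close> by (auto simp: t_def)
    moreover have "\<bar>Re x - t\<bar> < \<delta> / 2"
      using norm_x abs_Re_le_cmod[of x] \<delta> \<open>a > 0\<close> by (auto simp: t_def max_def min_def abs_if)
    ultimately show False using far[OF that] dist_le[of t] Im_x by fastforce
  qed
  with \<delta> show ?thesis using that by blast
qed


abbreviation cpoly :: "real poly \<Rightarrow> complex \<Rightarrow> complex" where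
  "cpoly p \<equiv> poly (map_poly complex_of_real p)"

lemma cpoly_add: "cpoly (p + q) y = cpoly p y + cpoly q y"
proof -
  have "map_poly complex_of_real (p + q) = map_poly complex_of_real p + map_poly complex_of_real q"
    by (intro poly_eqI) (simp add: coeff_map_poly)
  then show ?thesis by simp
qed

lemma cpoly_smult: "cpoly (smult c p) y = complex_of_real c * cpoly p y"
  by (simp add: map_poly_smult)

lemma cpoly_pCons: "cpoly (pCons c p) y = complex_of_real c + y * cpoly p y"
  by (simp add: map_poly_pCons)

lemma freud_ip_commute: "freud_ip f g = freud_ip g f"
  by (simp add: freud_ip_eq_functional mult.commute)

lemma freud_ip_pos: "p \<noteq> 0 \<Longrightarrow> freud_ip p p > 0"
  by (simp add: freud_ip_eq_functional freud_functional_square_pos)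

lemma freud_ip_add_left: "freud_ip (f + g) h = freud_ip f h + freud_ip g h"
  by (simp add: freud_ip_eq_functional distrib_right freud_functional_add)

lemma freud_ip_add_right: "freud_ip h (f + g) = freud_ip h f + freud_ip h g"
  by (simp add: freud_ip_eq_functional distrib_left freud_functional_add)

lemma freud_ip_diff_left: "freud_ip (f - g) h = freud_ip f h - freud_ip g h"
  by (simp add: freud_ip_eq_functional left_diff_distrib freud_functional_diff)

lemma freud_ip_diff_right: "freud_ip h (f - g) = freud_ip h f - freud_ip h g"
  by (simp add: freud_ip_eq_functional right_diff_distrib freud_functional_diff)

lemma freud_ip_smult_left: "freud_ip (smult c f) g = c * freud_ip f g"
  by (simp add: freud_ip_eq_functional freud_functional_smult)

lemma freud_ip_smult_right: "freud_ip f (smult c g) = c * freud_ip f g"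
  by (simp add: freud_ip_eq_functional freud_functional_smult)

lemma freud_ip_times_x: "freud_ip (pCons 0 f) g = freud_ip f (pCons 0 g)"
  by (simp add: freud_ip_eq_functional mult_pCons_left mult_pCons_right mult.commute)

lemma eq_0_or_degree_less:
  fixes q :: "'a::zero poly"
  assumes "degree q \<le> n" "coeff q n = 0"
  shows "q = 0 \<or> degree q < n"
  using assms le_neq_implies_less by fastforce

lemma monic_orthogonal_unique:
  fixes ip :: "real poly \<Rightarrow> real poly \<Rightarrow> real"
  assumes diff: "\<And>f g h. ip (f - g) h = ip f h - ip g h"
    and pos: "\<And>f. f \<noteq> 0 \<Longrightarrow> ip f f > 0"
    and A: "degree A = n" "lead_coeff A = 1" "\<forall>q. degree q < n \<longrightarrow> ip A q = 0"
    and B: "degree B = n" "lead_coeff B = 1" "\<forall>q. degree q < n \<longrightarrow> ip B q = 0"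
  shows "A = B"
proof (rule ccontr)
  assume ne: "A \<noteq> B"
  have "degree (A - B) \<le> n" by (rule degree_diff_le) (simp_all add: A B)
  moreover have "coeff (A - B) n = 0" using A B by simp
  ultimately have "degree (A - B) < n" using ne eq_0_or_degree_less by fastforce
  then have "ip (A - B) (A - B) = 0" using diff A(3) B(3) by simp
  with pos[of "A - B"] ne show False by simp
qed

lemma pCons_poly_0_synthetic_div: "p = pCons (poly p 0) (synthetic_div p 0)"
  using synthetic_div_correct[of p 0] by simp


section \<open>Orthogonal polynomials for the weight \<open>e\<^sup>-\<^sup>x\<^sup>4\<close>\<close>

locale freud_orthogonal =
  fixes P :: "nat \<Rightarrow> real poly"
  assumes monic_orthogonal: "monic_orthogonal_sequence freud_ip P"
begin

lemma degree_P [simp]: "degree (P n) = n"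
  using monic_orthogonal by (simp add: monic_orthogonal_sequence_def)

lemma lead_coeff_P: "lead_coeff (P n) = 1"
  using monic_orthogonal by (simp add: monic_orthogonal_sequence_def)

lemma coeff_P_self [simp]: "coeff (P n) n = 1"
  using lead_coeff_P[of n] by simp

lemma P_nonzero: "P n \<noteq> 0"
  using coeff_P_self[of n] by (metis coeff_0 zero_neq_one)

lemma orthogonal_P: "q = 0 \<or> degree q < n \<Longrightarrow> freud_ip (P n) q = 0"
  using monic_orthogonal by (auto simp: monic_orthogonal_sequence_def freud_ip_eq_functional)

lemma P_0: "P 0 = 1"
  using degree_P[of 0] lead_coeff_P[of 0] by (metis degree_eq_zeroE lead_coeff_pCons(2) one_pCons)

definition norm_sq :: "nat \<Rightarrow> real" where
  "norm_sq n = freud_ip (P n) (P n)"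

lemma norm_sq_pos: "norm_sq n > 0"
  unfolding norm_sq_def by (rule freud_ip_pos[OF P_nonzero])

lemma freud_ip_P_eq_coeff:
  assumes "degree q \<le> n"
  shows "freud_ip (P n) q = coeff q n * norm_sq n"
proof -
  let ?D = "q - smult (coeff q n) (P n)"
  have "degree ?D \<le> n" using assms by (intro degree_diff_le) (auto intro: order.trans degree_smult_le)
  moreover have "coeff ?D n = 0" by simp
  ultimately have "freud_ip (P n) ?D = 0" by (intro orthogonal_P eq_0_or_degree_less)
  then show ?thesis by (simp add: freud_ip_diff_right freud_ip_smult_right norm_sq_def)
qed

lemma freud_ip_P_P:
  assumes "m \<noteq> n"
  shows "freud_ip (P m) (P n) = 0"
proof (cases "m < n")
  case True
  then show ?thesis using orthogonal_P[of "P m" n] by (simp add: freud_ip_commute)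
next
  case False
  with assms show ?thesis by (intro orthogonal_P) simp
qed

lemma orthogonal_eq_smult_P:
  assumes "degree D \<le> m" and "\<And>q. degree q < m \<Longrightarrow> freud_ip D q = 0"
  shows "D = smult (coeff D m) (P m)"
proof -
  let ?E = "D - smult (coeff D m) (P m)"
  have "degree ?E \<le> m" using assms(1) by (intro degree_diff_le) (auto intro: order.trans degree_smult_le)
  moreover have "coeff ?E m = 0" by simp
  ultimately have "?E = 0 \<or> degree ?E < m" by (rule eq_0_or_degree_less)
  moreover have "freud_ip ?E q = 0" if "degree q < m" for q
    using assms(2)[OF that] orthogonal_P[of q m] that
    by (simp add: freud_ip_diff_left freud_ip_smult_left freud_ip_commute[of _ q]
        freud_ip_diff_right freud_ip_smult_right)
  ultimately have "?E = 0" using freud_ip_pos[of ?E] by force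
  then show ?thesis by simp
qed

text \<open>The weight is even, so \<open>(-1)\<^sup>n P\<^sub>n(-x)\<close> is again monic orthogonal.\<close>
lemma P_reflect: "pcompose (P n) [:0, -1:] = smult ((-1) ^ n) (P n)"
proof -
  let ?r = "[:0, -1::real:]"
  let ?R = "smult ((-1) ^ n) (pcompose (P n) ?r)"
  have "lead_coeff (pcompose (P n) ?r) = (-1) ^ n"
    by (subst lead_coeff_comp) simp_all
  then have "lead_coeff ?R = 1"
    by (simp add: degree_pcompose power_mult_distrib[symmetric])
  moreover have "freud_ip ?R q = 0" if "degree q < n" for q
  proof -
    have "pcompose (P n * pcompose q ?r) ?r = pcompose (P n) ?r * q"
      by (simp add: pcompose_mult pcompose_assoc[symmetric] pcompose_pCons)
    then have "freud_functional (pcompose (P n) ?r * q) = freud_ip (P n) (pcompose q ?r)"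
      by (metis freud_functional_reflect freud_ip_eq_functional)
    also have "\<dots> = 0" using that by (intro orthogonal_P) (simp add: degree_pcompose)
    finally show ?thesis by (simp add: freud_ip_eq_functional freud_functional_smult)
  qed
  ultimately have "?R = P n"
    using monic_orthogonal
    by (intro monic_orthogonal_unique[OF freud_ip_diff_left freud_ip_pos, of _ n])
       (auto simp: degree_pcompose monic_orthogonal_sequence_def)
  then have "smult ((-1) ^ n) ?R = smult ((-1) ^ n) (P n)" by simp
  then show ?thesis by (simp add: power_mult_distrib[symmetric])
qed

lemma poly_P_minus: "poly (P n) (- x) = (-1) ^ n * poly (P n) x"
  using arg_cong[OF P_reflect[of n], of "\<lambda>p. poly p x"] by (simp add: poly_pcompose)

lemma freud_ip_x_P_P: "freud_ip (pCons 0 (P n)) (P n) = 0"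
proof -
  have "poly (pCons 0 (P n) * P n) (- x) = - poly (pCons 0 (P n) * P n) x" for x
    using poly_P_minus[of n x] by (simp add: power_mult_distrib[symmetric])
  then show ?thesis by (simp add: freud_ip_eq_functional freud_functional_odd)
qed

definition rec_coeff :: "nat \<Rightarrow> real" where
  "rec_coeff n = (if n = 0 then 0 else norm_sq n / norm_sq (n - 1))"

lemma rec_coeff_pos: "n > 0 \<Longrightarrow> rec_coeff n > 0"
  by (simp add: rec_coeff_def norm_sq_pos)

lemma rec_coeff_nonneg: "rec_coeff n \<ge> 0"
  by (cases "n = 0") (auto simp: rec_coeff_def norm_sq_pos less_imp_le)

lemma norm_sq_Suc: "norm_sq (Suc n) = rec_coeff (Suc n) * norm_sq n"
  using norm_sq_pos[of n] by (simp add: rec_coeff_def)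

lemma three_term_recurrence: "pCons 0 (P n) = P (Suc n) + smult (rec_coeff n) (P (n - 1))"
proof -
  let ?D = "pCons 0 (P n) - P (Suc n)"
  have "?D = 0 \<or> degree ?D < Suc n"
    by (intro eq_0_or_degree_less degree_diff_le) (simp_all add: P_nonzero lead_coeff_P)
  then have "degree ?D \<le> n" by auto
  moreover have "freud_ip (P n) ?D = 0"
    using freud_ip_x_P_P[of n] freud_ip_P_P[of n "Suc n"]
    by (simp add: freud_ip_diff_right freud_ip_commute[of "P n"])
  ultimately have "coeff ?D n = 0" using freud_ip_P_eq_coeff[of ?D n] norm_sq_pos[of n] by simp
  with \<open>degree ?D \<le> n\<close> have D: "?D = 0 \<or> degree ?D < n" by (rule eq_0_or_degree_less)
  show ?thesis
  proof (cases n)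
    case 0
    with D show ?thesis by (simp add: rec_coeff_def)
  next
    case (Suc m)
    have "?D = smult (coeff ?D m) (P m)"
    proof (rule orthogonal_eq_smult_P)
      show "degree ?D \<le> m" using D Suc by auto
      show "freud_ip ?D q = 0" if "degree q < m" for q
        using that Suc orthogonal_P[of "pCons 0 q" n] orthogonal_P[of q "Suc n"]
        by (cases "q = 0") (auto simp: freud_ip_diff_left freud_ip_times_x)
    qed
    moreover have "coeff ?D m = rec_coeff n"
    proof -
      have "coeff ?D m * norm_sq m = freud_ip (P m) ?D"
        using D Suc by (intro freud_ip_P_eq_coeff[symmetric]) auto
      also have "\<dots> = freud_ip (P m) (pCons 0 (P n))"
        using freud_ip_P_P[of m "Suc n"] Suc by (simp add: freud_ip_diff_right)
      also have "\<dots> = freud_ip (P n) (pCons 0 (P m))"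
        by (metis freud_ip_commute freud_ip_times_x)
      also have "\<dots> = norm_sq n" using Suc by (subst freud_ip_P_eq_coeff) simp_all
      finally show ?thesis using Suc norm_sq_pos[of m] by (simp add: rec_coeff_def field_simps)
    qed
    ultimately show ?thesis using Suc by (simp add: diff_eq_eq add.commute)
  qed
qed


lemma freud_ip_x_P_x_P: "freud_ip (pCons 0 (P n)) (pCons 0 (P n)) = norm_sq n * (rec_coeff (Suc n) + rec_coeff n)"
proof -
  have "freud_ip (pCons 0 (P n)) (pCons 0 (P n)) = norm_sq (Suc n) + rec_coeff n * rec_coeff n * norm_sq (n - 1)"
    unfolding three_term_recurrence
    using freud_ip_P_P[of "Suc n" "n - 1"] freud_ip_P_P[of "n - 1" "Suc n"]
    by (simp add: freud_ip_add_left freud_ip_add_right freud_ip_smult_left freud_ip_smult_right norm_sq_def)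
  also have "\<dots> = norm_sq n * (rec_coeff (Suc n) + rec_coeff n)"
  proof (cases n)
    case 0 then show ?thesis using norm_sq_Suc[of 0] by (simp add: rec_coeff_def)
  next
    case (Suc m)
    then have "rec_coeff n * norm_sq (n - 1) = norm_sq n" using norm_sq_pos[of m] by (simp add: rec_coeff_def)
    then show ?thesis by (simp add: norm_sq_Suc algebra_simps)
  qed
  finally show ?thesis .
qed

lemma freud_ip_x_P_x2_P:
  "freud_ip (pCons 0 (P (Suc m))) (pCons 0 (pCons 0 (P m)))
     = norm_sq (Suc m) * (rec_coeff (Suc (Suc m)) + rec_coeff (Suc m) + rec_coeff m)"
proof -
  have shifted: "rec_coeff m * freud_ip (pCons 0 (P (Suc m))) (pCons 0 (P (m - 1))) = rec_coeff m * norm_sq (Suc m)"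
  proof (cases m)
    case (Suc k)
    have "freud_ip (pCons 0 (P (Suc m))) (pCons 0 (P (m - 1))) = freud_ip (P (Suc m)) (pCons 0 (pCons 0 (P k)))"
      by (simp add: freud_ip_times_x Suc)
    also have "\<dots> = norm_sq (Suc m)" by (subst freud_ip_P_eq_coeff) (simp_all add: Suc)
    finally show ?thesis by simp
  qed (simp add: rec_coeff_def)
  have x2_P: "pCons 0 (pCons 0 (P m)) = pCons 0 (P (Suc m)) + smult (rec_coeff m) (pCons 0 (P (m - 1)))"
    using three_term_recurrence[of m] by simp
  show ?thesis
    unfolding x2_P freud_ip_add_right freud_ip_smult_right freud_ip_x_P_x_P shifted
    by (simp add: algebra_simps)
qed

text \<open>Freud's equation, from integrating \<open>P\<^sub>m P'\<^sub>m\<^sub>+\<^sub>1\<close> by parts against the weight.\<close>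
lemma freud_equation:
  assumes "n \<ge> 1"
  shows "4 * rec_coeff n * (rec_coeff (n - 1) + rec_coeff n + rec_coeff (Suc n)) = real n"
proof -
  obtain m where n: "n = Suc m" using assms by (cases n) auto
  have "real n * norm_sq m = freud_ip (P m) (pderiv (P n))"
    by (subst freud_ip_P_eq_coeff) (simp_all add: degree_pderiv coeff_pderiv n)
  also have "\<dots> = freud_functional (pderiv (P n * P m))"
  proof -
    have "freud_ip (P n) (pderiv (P m)) = 0"
      by (rule orthogonal_P) (cases m, auto simp: degree_pderiv n)
    then show ?thesis
      by (simp add: pderiv_mult freud_functional_add freud_ip_eq_functional mult.commute)
  qed
  also have "\<dots> = freud_functional (smult 4 (pCons 0 (P n) * pCons 0 (pCons 0 (P m))))"
  proof -
    have "monom 4 3 * (P n * P m) = smult 4 (pCons 0 (P n) * pCons 0 (pCons 0 (P m)))"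
      by (simp add: poly_eq_poly_eq_iff[symmetric] fun_eq_iff poly_monom power3_eq_cube)
    then show ?thesis by (simp only: freud_functional_pderiv)
  qed
  also have "\<dots> = 4 * freud_ip (pCons 0 (P n)) (pCons 0 (pCons 0 (P m)))"
    by (simp only: freud_functional_smult freud_ip_eq_functional)
  also have "\<dots> = (4 * rec_coeff n * (rec_coeff (Suc n) + rec_coeff n + rec_coeff m)) * norm_sq m"
    unfolding n freud_ip_x_P_x2_P norm_sq_Suc by simp
  finally show ?thesis using norm_sq_pos[of m] n by (simp add: ac_simps)
qed

lemma freud_sequence_rec_coeff: "freud_sequence rec_coeff"
  by unfold_locales (simp_all add: rec_coeff_nonneg freud_equation del: One_nat_def)

lemma rec_coeff_le_sqrt: "rec_coeff n \<le> sqrt (real n) / 2"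
proof (cases "n = 0")
  case False
  then show ?thesis by (intro freud_sequence.le_half_sqrt[OF freud_sequence_rec_coeff]) auto
qed (simp add: rec_coeff_def)

lemma rec_coeff_asymptotics: "(\<lambda>n. rec_coeff n / sqrt (real n)) \<longlonglongrightarrow> 1 / sqrt 12"
  by (rule freud_sequence.limit[OF freud_sequence_rec_coeff])

lemma P_1: "P (Suc 0) = [:0, 1:]"
  using three_term_recurrence[of 0] by (simp add: rec_coeff_def P_0 one_pCons)

lemma poly_P_0_odd: "odd n \<Longrightarrow> poly (P n) 0 = 0"
  using poly_P_minus[of n 0] by simp

lemma poly_P_0_Suc_Suc: "poly (P (Suc (Suc n))) 0 = - rec_coeff (Suc n) * poly (P n) 0"
  using arg_cong[OF three_term_recurrence[of "Suc n"], of "\<lambda>p. poly p 0"] by simp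

lemma poly_P_0_even:
  assumes "even n"
  shows "poly (P n) 0 \<noteq> 0"
proof -
  have "rec_coeff (Suc k) \<noteq> 0" for k using rec_coeff_pos[of "Suc k"] by simp
  then have "poly (P (2 * k)) 0 \<noteq> 0" for k
    by (induction k) (simp_all add: P_0 poly_P_0_Suc_Suc)
  with assms show ?thesis by (auto elim: evenE)
qed

lemma cpoly_three_term_recurrence:
  "cpoly (P (Suc (Suc k))) y = y * cpoly (P (Suc k)) y - complex_of_real (rec_coeff (Suc k)) * cpoly (P k) y"
  using arg_cong[OF three_term_recurrence[of "Suc k"], of "\<lambda>p. cpoly p y"]
  by (simp add: cpoly_add cpoly_smult cpoly_pCons)


definition P_div_x :: "nat \<Rightarrow> real poly" where
  "P_div_x k = synthetic_div (P (Suc k)) 0"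

definition kernel_term :: "nat \<Rightarrow> real" where
  "kernel_term k = (poly (P k) 0)\<^sup>2 / norm_sq k"

definition kernel_0 :: "nat \<Rightarrow> real" where
  "kernel_0 k = (\<Sum>i\<le>k. kernel_term i)"

lemma P_Suc_eq_x_times: "even k \<Longrightarrow> P (Suc k) = pCons 0 (P_div_x k)"
  using pCons_poly_0_synthetic_div[of "P (Suc k)"] poly_P_0_odd[of "Suc k"] by (simp add: P_div_x_def)

lemma degree_P_div_x: "degree (P_div_x k) = k"
  by (simp add: P_div_x_def degree_synthetic_div)

lemma coeff_P_div_x: "even k \<Longrightarrow> coeff (P_div_x k) k = 1"
  using coeff_P_self[of "Suc k"] P_Suc_eq_x_times[of k] by simp

lemma freud_functional_P_div_x_mult:
  assumes "even k" and "degree q \<le> Suc k"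
  shows "freud_functional (P_div_x k * q) = poly q 0 * freud_functional (P_div_x k)"
proof -
  let ?W = "synthetic_div q 0"
  have "P_div_x k * q = smult (poly q 0) (P_div_x k) + P (Suc k) * ?W"
    by (subst pCons_poly_0_synthetic_div[of q])
       (simp add: mult_pCons_right P_Suc_eq_x_times[OF assms(1)] mult_pCons_left)
  moreover have "freud_ip (P (Suc k)) ?W = 0"
    using assms(2) by (intro orthogonal_P) (auto simp: degree_synthetic_div)
  ultimately show ?thesis
    by (simp add: freud_functional_add freud_functional_smult freud_ip_eq_functional)
qed

lemma freud_functional_P_div_x:
  assumes "even k"
  shows "freud_functional (P_div_x k) = norm_sq k / poly (P k) 0"
proof -
  have "norm_sq k = freud_ip (P k) (P_div_x k)"
    using freud_ip_P_eq_coeff[of "P_div_x k" k] degree_P_div_x coeff_P_div_x[OF assms] by simp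
  also have "\<dots> = poly (P k) 0 * freud_functional (P_div_x k)"
    using freud_functional_P_div_x_mult[OF assms, of "P k"]
    by (simp add: freud_ip_eq_functional mult.commute)
  finally show ?thesis using poly_P_0_even[OF assms] by (simp add: field_simps)
qed

lemma P_div_x_Suc_Suc:
  assumes "even k"
  shows "P_div_x (Suc (Suc k)) = P (Suc (Suc k)) - smult (rec_coeff (Suc (Suc k))) (P_div_x k)"
proof -
  have "pCons 0 (P_div_x (Suc (Suc k))) = P (Suc (Suc (Suc k)))"
    using P_Suc_eq_x_times[of "Suc (Suc k)"] assms by simp
  also have "\<dots> = pCons 0 (P (Suc (Suc k))) - smult (rec_coeff (Suc (Suc k))) (P (Suc k))"
    using three_term_recurrence[of "Suc (Suc k)"] by simp
  also have "\<dots> = pCons 0 (P (Suc (Suc k)) - smult (rec_coeff (Suc (Suc k))) (P_div_x k))"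
    using P_Suc_eq_x_times[OF assms] by simp
  finally show ?thesis by simp
qed

lemma norm_sq_Suc_Suc: "norm_sq (Suc (Suc k)) = rec_coeff (Suc (Suc k)) * rec_coeff (Suc k) * norm_sq k"
  using norm_sq_Suc[of "Suc k"] norm_sq_Suc[of k] by simp

lemma kernel_term_nonneg: "kernel_term k \<ge> 0"
  using norm_sq_pos[of k] by (simp add: kernel_term_def)

lemma kernel_term_pos: "even k \<Longrightarrow> kernel_term k > 0"
  using poly_P_0_even[of k] norm_sq_pos[of k] by (simp add: kernel_term_def)

lemma kernel_term_Suc_Suc:
  "kernel_term (Suc (Suc k)) = kernel_term k * rec_coeff (Suc k) / rec_coeff (Suc (Suc k))"
  unfolding kernel_term_def norm_sq_Suc_Suc poly_P_0_Suc_Suc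
  using rec_coeff_pos[of "Suc k"] rec_coeff_pos[of "Suc (Suc k)"] norm_sq_pos[of k]
  by (simp add: field_simps power2_eq_square)

lemma kernel_0_pos: "kernel_0 k > 0"
  unfolding kernel_0_def using kernel_term_pos[of 0]
  by (intro sum_pos2[of _ 0]) (auto intro: kernel_term_nonneg)

lemma kernel_0_even: "kernel_0 (2 * j) = (\<Sum>i\<le>j. kernel_term (2 * i))"
proof (induction j)
  case (Suc j)
  have "kernel_term (Suc (2 * j)) = 0" by (simp add: kernel_term_def poly_P_0_odd)
  then show ?case using Suc by (simp add: kernel_0_def)
qed (simp add: kernel_0_def)

lemma poly_P_div_x_0:
  assumes "even k"
  shows "poly (P_div_x k) 0 * poly (P k) 0 / norm_sq k = kernel_0 k"
proof -
  have "poly (P_div_x (2 * j)) 0 * poly (P (2 * j)) 0 / norm_sq (2 * j) = kernel_0 (2 * j)" for j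
  proof (induction j)
    case 0
    have "P_div_x 0 = 1" using P_1 P_Suc_eq_x_times[of 0] by simp
    then show ?case by (simp add: kernel_0_def kernel_term_def P_0)
  next
    case (Suc j)
    let ?k = "2 * j" and ?b1 = "rec_coeff (Suc (2 * j))" and ?b2 = "rec_coeff (Suc (Suc (2 * j)))"
    have "poly (P_div_x (Suc (Suc ?k))) 0 * poly (P (Suc (Suc ?k))) 0 / norm_sq (Suc (Suc ?k))
        = kernel_term (Suc (Suc ?k)) + ?b2 * poly (P_div_x ?k) 0 * ?b1 * poly (P ?k) 0 / (?b2 * ?b1 * norm_sq ?k)"
      unfolding P_div_x_Suc_Suc[of ?k, simplified] kernel_term_def norm_sq_Suc_Suc poly_P_0_Suc_Suc
      using rec_coeff_pos[of "Suc ?k"] rec_coeff_pos[of "Suc (Suc ?k)"] norm_sq_pos[of ?k]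
      by (simp add: poly_P_0_Suc_Suc field_simps power2_eq_square)
    also have "\<dots> = kernel_term (Suc (Suc ?k)) + kernel_0 ?k"
      using rec_coeff_pos[of "Suc ?k"] rec_coeff_pos[of "Suc (Suc ?k)"] Suc.IH by simp
    also have "\<dots> = kernel_0 (Suc (Suc ?k))"
      by (simp add: kernel_0_def kernel_term_def poly_P_0_odd)
    finally show ?case by simp
  qed
  with assms show ?thesis by (auto elim: evenE)
qed

lemma kernel_term_over_kernel_0_tendsto_0: "(\<lambda>j. kernel_term (2 * j) / kernel_0 (2 * j)) \<longlonglongrightarrow> 0"
proof -
  have "(\<lambda>n. rec_coeff n / rec_coeff (Suc n)) \<longlonglongrightarrow> 1"
    by (rule ratio_Suc_tendsto_1_if_sqrt_asymptotic[OF rec_coeff_asymptotics]) simp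
  moreover have "kernel_term (2 * j) \<noteq> 0" for j using kernel_term_pos[of "2 * j"] by simp
  ultimately have "(\<lambda>j. kernel_term (2 * Suc j) / kernel_term (2 * j)) \<longlonglongrightarrow> 1"
    using LIMSEQ_subseq_LIMSEQ[of _ 1 "\<lambda>j. Suc (2 * j)"]
    by (simp add: strict_mono_def o_def kernel_term_Suc_Suc)
  then have "(\<lambda>j. kernel_term (2 * j) / (\<Sum>i\<le>j. kernel_term (2 * i))) \<longlonglongrightarrow> 0"
    by (intro last_term_over_partial_sum_tendsto_0) (auto intro: kernel_term_pos)
  then show ?thesis by (simp add: kernel_0_even)
qed


lemma cpoly_P_ratio_half_plane:
  assumes "Im y \<noteq> 0"
  shows "cpoly (P (Suc m)) y \<noteq> 0 \<and> cmod (cpoly (P m) y / cpoly (P (Suc m)) y) / cmod y \<le> 1 / (Im y)\<^sup>2"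
proof -
  have ratio: "cpoly (P (Suc m)) y \<noteq> 0" "cmod (cpoly (P m) y / cpoly (P (Suc m)) y) \<le> 1 / \<bar>Im y\<bar>"
    using three_term_ratio_bound_half_plane[of "\<lambda>k. cpoly (P k) y" y rec_coeff m,
        OF _ _ cpoly_three_term_recurrence rec_coeff_nonneg assms]
    by (simp_all add: P_0 P_1 cpoly_pCons)
  have "cmod (cpoly (P m) y / cpoly (P (Suc m)) y) / cmod y \<le> (1 / \<bar>Im y\<bar>) / \<bar>Im y\<bar>"
    using ratio(2) abs_Im_le_cmod[of y] assms by (intro frac_le) auto
  also have "\<dots> = 1 / (Im y)\<^sup>2" by (simp add: power2_eq_square abs_mult_self_eq)
  finally show ?thesis using ratio(1) by simp
qed

lemma cpoly_P_ratio_disk: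
  assumes "\<And>k. k < n \<Longrightarrow> rec_coeff k \<le> B" and "4 * B \<le> (cmod y)\<^sup>2" and "y \<noteq> 0" and "m < n"
  shows "cpoly (P (Suc m)) y \<noteq> 0 \<and> cmod (cpoly (P m) y / cpoly (P (Suc m)) y) / cmod y \<le> 2 / (cmod y)\<^sup>2"
proof -
  have ratio: "cpoly (P (Suc m)) y \<noteq> 0" "cmod (cpoly (P m) y / cpoly (P (Suc m)) y) \<le> 2 / cmod y"
    using three_term_ratio_bound_disk[of "\<lambda>k. cpoly (P k) y" y rec_coeff,
        OF _ _ cpoly_three_term_recurrence rec_coeff_nonneg assms(3,1,2,4)]
    by (simp_all add: P_0 P_1 cpoly_pCons)
  have "cmod (cpoly (P m) y / cpoly (P (Suc m)) y) / cmod y \<le> (2 / cmod y) / cmod y"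
    using ratio(2) by (intro divide_right_mono) auto
  then show ?thesis using ratio(1) by (simp add: power2_eq_square)
qed

text \<open>Off the segment \<open>[-a, a]\<close>, either \<open>Im y\<close> or \<open>|y|\<close> is large; in the second case the
  recurrence coefficients are small compared to \<open>|y|\<close>.\<close>
lemma cpoly_P_ratio_bound:
  fixes x :: complex
  assumes q: "q > 0" and "a > 0" and "\<delta> > 0" and "m < n"
    and off_segment: "\<delta> / 2 \<le> \<bar>Im x\<bar> \<or> a + \<delta> / 2 \<le> cmod x"
    and coeff_bound: "\<And>k. k < n \<Longrightarrow> rec_coeff k \<le> B" and "4 * B \<le> (q * (a + \<delta> / 2))\<^sup>2"
  defines "y \<equiv> complex_of_real q * x"
  shows "cpoly (P (Suc m)) y \<noteq> 0 \<and> y \<noteq> 0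
    \<and> cmod (cpoly (P m) y / cpoly (P (Suc m)) y) / cmod y \<le> (4 / \<delta>\<^sup>2 + 2 / a\<^sup>2) / q\<^sup>2"
  using off_segment
proof
  assume "\<delta> / 2 \<le> \<bar>Im x\<bar>"
  then have Im_y: "q * (\<delta> / 2) \<le> \<bar>Im y\<bar>" using q by (simp add: y_def abs_mult)
  moreover have "0 < q * (\<delta> / 2)" using q \<open>\<delta> > 0\<close> by simp
  ultimately have Im_y_nonzero: "Im y \<noteq> 0" by linarith
  moreover have "1 / (Im y)\<^sup>2 \<le> (4 / \<delta>\<^sup>2 + 2 / a\<^sup>2) / q\<^sup>2"
  proof -
    have "\<bar>q * (\<delta> / 2)\<bar> \<le> \<bar>Im y\<bar>" using Im_y q \<open>\<delta> > 0\<close> by simp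
    then have "(q * (\<delta> / 2))\<^sup>2 \<le> (Im y)\<^sup>2" by (simp only: abs_le_square_iff)
    moreover have "0 < (q * (\<delta> / 2))\<^sup>2" using q \<open>\<delta> > 0\<close> by simp
    ultimately have "1 / (Im y)\<^sup>2 \<le> 1 / (q * (\<delta> / 2))\<^sup>2"
      using Im_y_nonzero by (intro divide_left_mono) auto
    also have "\<dots> \<le> (4 / \<delta>\<^sup>2 + 2 / a\<^sup>2) / q\<^sup>2"
      using q \<open>\<delta> > 0\<close> by (simp add: field_simps power2_eq_square)
    finally show ?thesis .
  qed
  ultimately show ?thesis using cpoly_P_ratio_half_plane[of y m] by force
next
  assume "a + \<delta> / 2 \<le> cmod x"
  then have "q * (a + \<delta> / 2) \<le> cmod y" and qa: "q * a \<le> cmod y"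
    using q \<open>\<delta> > 0\<close> by (simp_all add: y_def norm_mult)
  then have "4 * B \<le> (cmod y)\<^sup>2"
    using q \<open>a > 0\<close> \<open>\<delta> > 0\<close> \<open>4 * B \<le> (q * (a + \<delta> / 2))\<^sup>2\<close>
    by (auto intro: order_trans power_mono)
  moreover have "0 < q * a" using q \<open>a > 0\<close> by simp
  moreover have "2 / (cmod y)\<^sup>2 \<le> (4 / \<delta>\<^sup>2 + 2 / a\<^sup>2) / q\<^sup>2"
  proof -
    have "0 < cmod y" using qa q \<open>a > 0\<close> by (meson less_le_trans mult_pos_pos)
    then have "2 / (cmod y)\<^sup>2 \<le> 2 / (q * a)\<^sup>2"
      using qa q \<open>a > 0\<close> by (intro divide_left_mono power_mono) auto
    also have "\<dots> \<le> (4 / \<delta>\<^sup>2 + 2 / a\<^sup>2) / q\<^sup>2"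
      using q \<open>\<delta> > 0\<close> \<open>a > 0\<close> by (simp add: field_simps power2_eq_square)
    finally show ?thesis .
  qed
  ultimately show ?thesis
    using cpoly_P_ratio_disk[OF coeff_bound _ _ \<open>m < n\<close>] qa by force
qed

lemma eventually_cpoly_P_ratio_bound:
  assumes "0 < a" "4 / sqrt 12 \<le> a\<^sup>2" "0 < \<delta>"
  shows "eventually (\<lambda>n. \<forall>x. \<delta> / 2 \<le> \<bar>Im x\<bar> \<or> a + \<delta> / 2 \<le> cmod x \<longrightarrow>
      (let y = complex_of_real (root 4 (real n)) * x in cpoly (P n) y \<noteq> 0 \<and> y \<noteq> 0
        \<and> cmod (cpoly (P (n - 1)) y / cpoly (P n) y) / cmod y \<le> (4 / \<delta>\<^sup>2 + 2 / a\<^sup>2) / sqrt (real n)))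
    sequentially"
proof -
  define c where "c = (a + \<delta> / 2)\<^sup>2 / 4"
  have "a\<^sup>2 < (a + \<delta> / 2)\<^sup>2" using assms by (intro power_strict_mono) auto
  then have "1 / sqrt 12 < c" using assms(2) by (simp add: c_def)
  then have "eventually (\<lambda>n. \<forall>k<n. rec_coeff k \<le> c * sqrt (real n)) sequentially"
    by (rule eventually_all_less_le_sqrt[OF rec_coeff_asymptotics rec_coeff_nonneg])
  then show ?thesis
    using eventually_ge_at_top[of 1]
  proof eventually_elim
    case (elim n)
    have root: "(root 4 (real n))\<^sup>2 = sqrt (real n)"
      using real_root_mult_exp[of 2 2 "real n"] by (simp add: sqrt_def)
    have "4 * (c * sqrt (real n)) \<le> (root 4 (real n) * (a + \<delta> / 2))\<^sup>2"
      by (simp add: c_def power_mult_distrib root)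
    with elim cpoly_P_ratio_bound[of "root 4 (real n)" a \<delta> "n - 1" n]
    show ?case using assms by (auto simp: Let_def root)
  qed
qed

end


section \<open>Discrete Sobolev orthogonal polynomials\<close>

lemma sob_ip_diff_left: "sob_ip lam (f - g) h = sob_ip lam f h - sob_ip lam g h"
  by (simp add: sob_ip_def freud_ip_diff_left algebra_simps)

lemma sob_ip_pos: "lam \<ge> 0 \<Longrightarrow> f \<noteq> 0 \<Longrightarrow> sob_ip lam f f > 0"
  unfolding sob_ip_def using freud_ip_pos[of f]
  by (metis add_pos_nonneg mult_nonneg_nonneg mult.assoc zero_le_square)

locale sobolev_orthogonal = freud_orthogonal +
  fixes Q :: "nat \<Rightarrow> real poly" and lam :: real
  assumes monic_orthogonal_Q: "monic_orthogonal_sequence (sob_ip lam) Q"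
    and lam_nonneg: "lam \<ge> 0"
begin

lemma Q_eqI:
  assumes "degree R = n" "lead_coeff R = 1" "\<And>q. degree q < n \<Longrightarrow> sob_ip lam R q = 0"
  shows "Q n = R"
proof -
  have "degree (Q n) = n" "lead_coeff (Q n) = 1" "\<forall>q. degree q < n \<longrightarrow> sob_ip lam (Q n) q = 0"
    using monic_orthogonal_Q unfolding monic_orthogonal_sequence_def by blast+
  with assms show ?thesis
    by (intro monic_orthogonal_unique[OF sob_ip_diff_left sob_ip_pos[OF lam_nonneg]]) auto
qed

text \<open>For odd \<open>n\<close> the point mass at \<open>0\<close> does not see \<open>P\<^sub>n\<close>, which vanishes there.\<close>
lemma Q_odd: "odd n \<Longrightarrow> Q n = P n"
  by (rule Q_eqI) (auto simp: lead_coeff_P sob_ip_def orthogonal_P poly_P_0_odd)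

definition sobolev_coeff :: "nat \<Rightarrow> real" where
  "sobolev_coeff k = lam * rec_coeff (Suc k) * kernel_term k / (1 + lam * kernel_0 k)"

lemma sobolev_coeff_nonneg: "sobolev_coeff k \<ge> 0"
  using lam_nonneg rec_coeff_nonneg[of "Suc k"] kernel_term_nonneg[of k] kernel_0_pos[of k]
  by (simp add: sobolev_coeff_def add_pos_nonneg)

lemma sobolev_coeff_le: "sobolev_coeff k \<le> rec_coeff (Suc k) * (kernel_term k / kernel_0 k)"
proof -
  have "lam * kernel_term k / (1 + lam * kernel_0 k) \<le> kernel_term k / kernel_0 k"
    using lam_nonneg kernel_term_nonneg[of k] kernel_0_pos[of k]
    by (simp add: field_simps add_pos_nonneg)
  then have "rec_coeff (Suc k) * (lam * kernel_term k / (1 + lam * kernel_0 k))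
      \<le> rec_coeff (Suc k) * (kernel_term k / kernel_0 k)"
    using rec_coeff_nonneg[of "Suc k"] by (rule mult_left_mono)
  moreover have "sobolev_coeff k = rec_coeff (Suc k) * (lam * kernel_term k / (1 + lam * kernel_0 k))"
    by (simp add: sobolev_coeff_def)
  ultimately show ?thesis by simp
qed

lemma sobolev_coeff_cancels_point_mass:
  assumes "even k"
  shows "sobolev_coeff k * (freud_functional (P_div_x k) + lam * poly (P_div_x k) 0)
    + lam * poly (P (Suc (Suc k))) 0 = 0"
proof -
  let ?a = "poly (P k) 0"
  have a: "?a \<noteq> 0" by (rule poly_P_0_even[OF assms])
  have "freud_functional (P_div_x k) + lam * poly (P_div_x k) 0 = norm_sq k * (1 + lam * kernel_0 k) / ?a"
    using a poly_P_div_x_0[OF assms] norm_sq_pos[of k]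
    by (simp add: freud_functional_P_div_x[OF assms] field_simps)
  moreover have "1 + lam * kernel_0 k > 0" using kernel_0_pos[of k] lam_nonneg by (simp add: add_pos_nonneg)
  ultimately have "sobolev_coeff k * (freud_functional (P_div_x k) + lam * poly (P_div_x k) 0)
      = lam * rec_coeff (Suc k) * kernel_term k * norm_sq k / ?a"
    by (simp add: sobolev_coeff_def)
  also have "\<dots> = lam * rec_coeff (Suc k) * ?a"
    using a norm_sq_pos[of k] by (simp add: kernel_term_def field_simps power2_eq_square)
  finally show ?thesis by (simp add: poly_P_0_Suc_Suc)
qed

lemma Q_Suc_Suc_even:
  assumes "even k"
  shows "Q (Suc (Suc k)) = P (Suc (Suc k)) + smult (sobolev_coeff k) (P_div_x k)"
proof (rule Q_eqI)
  let ?R = "P (Suc (Suc k)) + smult (sobolev_coeff k) (P_div_x k)"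
  have "degree (smult (sobolev_coeff k) (P_div_x k)) < Suc (Suc k)"
    using degree_smult_le[of "sobolev_coeff k" "P_div_x k"] by (simp add: degree_P_div_x)
  then show deg: "degree ?R = Suc (Suc k)" by (simp add: degree_add_eq_left)
  show "lead_coeff ?R = 1" unfolding deg by (simp add: coeff_eq_0 degree_P_div_x)
  fix q :: "real poly" assume q: "degree q < Suc (Suc k)"
  have "freud_ip ?R q = sobolev_coeff k * (poly q 0 * freud_functional (P_div_x k))"
    using orthogonal_P[of q "Suc (Suc k)"] freud_functional_P_div_x_mult[OF assms, of q] q
    by (simp add: freud_ip_eq_functional distrib_right freud_functional_add freud_functional_smult)
  then have "sob_ip lam ?R q = poly q 0 * (sobolev_coeff k * (freud_functional (P_div_x k)
      + lam * poly (P_div_x k) 0) + lam * poly (P (Suc (Suc k))) 0)"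
    by (simp add: sob_ip_def algebra_simps)
  then show "sob_ip lam ?R q = 0" by (simp add: sobolev_coeff_cancels_point_mass[OF assms])
qed

definition sobolev_shift :: "nat \<Rightarrow> real" where
  "sobolev_shift n = (if even n \<and> n \<ge> 2 then sobolev_coeff (n - 2) else 0)"

lemma sobolev_shift_nonneg: "sobolev_shift n \<ge> 0"
  by (simp add: sobolev_shift_def sobolev_coeff_nonneg)

lemma cpoly_Q:
  assumes "n \<ge> 1" and "y \<noteq> 0"
  shows "cpoly (Q n) y = cpoly (P n) y + complex_of_real (sobolev_shift n) * cpoly (P (n - 1)) y / y"
proof (cases "even n")
  case True
  with assms(1) obtain k where k: "n = Suc (Suc k)" "even k"
    by (cases n; cases "n - 1") auto
  then have "cpoly (P (n - 1)) y = y * cpoly (P_div_x k) y"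
    by (simp add: P_Suc_eq_x_times cpoly_pCons)
  with k assms(2) show ?thesis
    by (simp add: Q_Suc_Suc_even cpoly_add cpoly_smult sobolev_shift_def)
qed (simp add: Q_odd sobolev_shift_def)

lemma sobolev_shift_over_sqrt_tendsto_0: "(\<lambda>n. sobolev_shift n / sqrt (real n)) \<longlonglongrightarrow> 0"
proof (rule tendsto_sandwich[where f = "\<lambda>n. 0"])
  define j where "j n = (n - 2) div 2" for n :: nat
  define w where "w n = kernel_term (2 * j n) / kernel_0 (2 * j n)" for n
  have "filterlim j sequentially sequentially"
    unfolding filterlim_at_top
  proof
    fix Z
    have "Z \<le> j n" if "n \<ge> 2 * Z + 2" for n
      using div_le_mono[of "2 * Z" "n - 2" 2] that by (simp add: j_def)
    then show "eventually (\<lambda>n. Z \<le> j n) sequentially" by (rule eventually_sequentiallyI)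
  qed
  from filterlim_compose[OF kernel_term_over_kernel_0_tendsto_0 this]
  have "w \<longlonglongrightarrow> 0" unfolding w_def[abs_def] by (simp add: o_def)
  then show "(\<lambda>n. w n / 2) \<longlonglongrightarrow> 0" by (rule tendsto_divide_zero)
  show "eventually (\<lambda>n. 0 \<le> sobolev_shift n / sqrt (real n)) sequentially"
    by (simp add: sobolev_shift_nonneg)
  have w: "0 \<le> w n" for n
    using kernel_term_nonneg kernel_0_pos by (simp add: w_def less_imp_le)
  have "sobolev_shift n / sqrt (real n) \<le> w n / 2" for n
  proof (cases "even n \<and> n \<ge> 2")
    case True
    then have n: "n - 2 = 2 * j n" "Suc (2 * j n) = n - 1" by (auto simp: j_def)
    have "sobolev_shift n \<le> rec_coeff (n - 1) * w n"
      using True sobolev_coeff_le[of "n - 2"] by (simp add: sobolev_shift_def w_def n)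
    also have "\<dots> \<le> sqrt (real n) / 2 * w n"
    proof (rule mult_right_mono[OF _ w])
      have "rec_coeff (n - 1) \<le> sqrt (real (n - 1)) / 2" by (rule rec_coeff_le_sqrt)
      also have "\<dots> \<le> sqrt (real n) / 2" by simp
      finally show "rec_coeff (n - 1) \<le> sqrt (real n) / 2" .
    qed
    finally show ?thesis using True by (simp add: field_simps)
  qed (use w in \<open>auto simp: sobolev_shift_def\<close>)
  then show "eventually (\<lambda>n. sobolev_shift n / sqrt (real n) \<le> w n / 2) sequentially"
    by simp
qed simp
lemma norm_P_over_Q_minus_1_le:
  assumes "n \<ge> 1" and "cpoly (P n) y \<noteq> 0" and "y \<noteq> 0"
  defines "e \<equiv> sobolev_shift n * (cmod (cpoly (P (n - 1)) y / cpoly (P n) y) / cmod y)"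
  assumes "e \<le> 1/2"
  shows "cmod (cpoly (P n) y / cpoly (Q n) y - 1) \<le> 2 * e"
proof -
  define E where "E = complex_of_real (sobolev_shift n) * (cpoly (P (n - 1)) y / cpoly (P n) y) / y"
  have "cmod E = e" by (simp add: E_def e_def norm_mult norm_divide sobolev_shift_nonneg)
  moreover have "cpoly (Q n) y = cpoly (P n) y * (1 + E)"
    using cpoly_Q[OF assms(1,3)] assms(2) by (simp add: E_def field_simps)
  ultimately have "cmod (cpoly (P n) y / cpoly (Q n) y - 1) \<le> 2 * cmod E"
    using assms(2,5) by (intro norm_divide_minus_1_le) auto
  with \<open>cmod E = e\<close> show ?thesis by simp
qed

lemma uniform_limit_P_over_Q:
  fixes K :: "complex set"
  assumes K: "compact K" "K \<inter> complex_of_real ` {-a..a} = {}" and a: "0 < a" "4 / sqrt 12 \<le> a\<^sup>2"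
  shows "uniform_limit K (\<lambda>n x. cpoly (P n) (complex_of_real (root 4 (real n)) * x)
      / cpoly (Q n) (complex_of_real (root 4 (real n)) * x)) (\<lambda>x. 1) sequentially"
  unfolding uniform_limit_iff
proof (intro allI impI)
  fix \<epsilon> :: real assume "\<epsilon> > 0"
  obtain \<delta> where \<delta>: "\<delta> > 0" and off_segment: "\<And>x. x \<in> K \<Longrightarrow> \<delta> / 2 \<le> \<bar>Im x\<bar> \<or> a + \<delta> / 2 \<le> cmod x"
    using compact_off_segment_bound[OF K a(1)] by blast
  define C where "C = 4 / \<delta>\<^sup>2 + 2 / a\<^sup>2"
  have "(\<lambda>n. sobolev_shift n / sqrt (real n) * C) \<longlonglongrightarrow> 0 * C"
    by (intro tendsto_intros sobolev_shift_over_sqrt_tendsto_0)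
  then have "eventually (\<lambda>n. sobolev_shift n / sqrt (real n) * C < min (1/2) (\<epsilon> / 2)) sequentially"
    using \<open>\<epsilon> > 0\<close> by (intro order_tendstoD(2)) auto
  with eventually_cpoly_P_ratio_bound[OF a \<delta>] eventually_ge_at_top[of 1]
  show "eventually (\<lambda>n. \<forall>x\<in>K. dist (cpoly (P n) (complex_of_real (root 4 (real n)) * x)
      / cpoly (Q n) (complex_of_real (root 4 (real n)) * x)) 1 < \<epsilon>) sequentially"
  proof eventually_elim
    case (elim n)
    show ?case
    proof
      fix x assume "x \<in> K"
      define y where "y = complex_of_real (root 4 (real n)) * x"
      have ratio: "cpoly (P n) y \<noteq> 0" "y \<noteq> 0"
        "cmod (cpoly (P (n - 1)) y / cpoly (P n) y) / cmod y \<le> C / sqrt (real n)"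
        using elim(1) off_segment[OF \<open>x \<in> K\<close>] by (auto simp: Let_def y_def C_def)
      have "sobolev_shift n * (cmod (cpoly (P (n - 1)) y / cpoly (P n) y) / cmod y)
          \<le> sobolev_shift n * (C / sqrt (real n))"
        using ratio(3) by (intro mult_left_mono sobolev_shift_nonneg)
      also have "\<dots> < min (1/2) (\<epsilon> / 2)" using elim(3) by simp
      finally have small: "sobolev_shift n * (cmod (cpoly (P (n - 1)) y / cpoly (P n) y) / cmod y)
          < min (1/2) (\<epsilon> / 2)" .
      then have "cmod (cpoly (P n) y / cpoly (Q n) y - 1)
          \<le> 2 * (sobolev_shift n * (cmod (cpoly (P (n - 1)) y / cpoly (P n) y) / cmod y))"
        by (intro norm_P_over_Q_minus_1_le[OF elim(2) ratio(1,2)]) simp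
      with small have "cmod (cpoly (P n) y / cpoly (Q n) y - 1) < \<epsilon>" by linarith
      then show "dist (cpoly (P n) (complex_of_real (root 4 (real n)) * x)
          / cpoly (Q n) (complex_of_real (root 4 (real n)) * x)) 1 < \<epsilon>"
        by (simp add: dist_norm y_def)
    qed
  qed
qed
end


section \<open>The limit function\<close>

lemma phi_nonzero: "phi z \<noteq> 0"
  and one_plus_phi_squared: "1 + (phi z)\<^sup>2 = 2 * z * phi z"
proof -
  define s where "s = csqrt (z - 1) * csqrt (z + 1)"
  have s: "s * s = z * z - 1"
    unfolding s_def by (simp add: algebra_simps flip: power2_eq_square)
  have phi: "phi z = z + s" by (simp add: phi_def s_def)
  have "phi z * (z - s) = 1" using s unfolding phi by (simp add: algebra_simps)
  then show "phi z \<noteq> 0" by auto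
  show "1 + (phi z)\<^sup>2 = 2 * z * phi z"
    using s unfolding phi by (simp add: algebra_simps power2_eq_square)
qed

text \<open>Since \<open>\<phi>\<close> inverts the Joukowski map \<open>w \<mapsto> (w + 1/w)/2\<close>, the limit function is the constant \<open>1\<close>.\<close>
lemma freud_sobolev_limit_eq_1:
  assumes "x \<noteq> 0"
  shows "complex_of_real (root 4 12) * (x * phi (complex_of_real (root 4 (3/4)) * x)
      / (1 + (phi (complex_of_real (root 4 (3/4)) * x))\<^sup>2)) = 1"
proof -
  have "root 4 12 = root 4 (16 * (3/4))" by simp
  also have "\<dots> = root 4 16 * root 4 (3/4)" by (rule real_root_mult)
  also have "root 4 (16::real) = 2" by (rule real_root_pos_unique) auto
  finally have "complex_of_real (root 4 12) * x = 2 * (complex_of_real (root 4 (3/4)) * x)" by simp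
  with assms show ?thesis
    by (simp add: one_plus_phi_squared phi_nonzero field_simps)
qed

lemma root_4_four_thirds_squared: "(root 4 (4/3))\<^sup>2 = 4 / sqrt 12"
proof -
  have "(root 4 (4/3))\<^sup>2 = sqrt (4/3)"
    using real_root_mult_exp[of 2 2 "4/3"] by (simp add: sqrt_def)
  also have "\<dots> = 4 / sqrt 12"
  proof -
    have "sqrt 12 = sqrt (4/3 * 9 :: real)" by simp
    also have "\<dots> = sqrt (4/3) * sqrt 9" by (rule real_sqrt_mult)
    finally have "sqrt 12 = sqrt (4/3) * sqrt (9::real)" .
    moreover have "sqrt (9::real) = 3" by (rule real_sqrt_unique) simp_all
    moreover have "sqrt (4/3) * sqrt (4/3) = (4/3::real)" by simp
    ultimately show ?thesis by (simp add: field_simps)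
  qed
  finally show ?thesis .
qed

theorem mainTheorem4:
  fixes lam1 :: real and P Q :: "nat \<Rightarrow> real poly" and K :: "complex set"
  assumes "lam1 \<ge> 0"
    and "monic_orthogonal_sequence freud_ip P"
    and "monic_orthogonal_sequence (sob_ip lam1) Q"
    and "compact K"
    and "K \<subseteq> - (complex_of_real ` {- root 4 (4/3) .. root 4 (4/3)})"
  shows "uniform_limit K
     (\<lambda>n x. poly (map_poly complex_of_real (P n)) (complex_of_real (root 4 (real n)) * x)
          / poly (map_poly complex_of_real (Q n)) (complex_of_real (root 4 (real n)) * x))
     (\<lambda>x. complex_of_real (root 4 12) *
          (x * phi (complex_of_real (root 4 (3/4)) * x)
           / (1 + (phi (complex_of_real (root 4 (3/4)) * x))\<^sup>2)))
     sequentially"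
proof -
  interpret sobolev_orthogonal P Q lam1
    using assms(1-3) by unfold_locales
  have limit: "uniform_limit K (\<lambda>n x. cpoly (P n) (complex_of_real (root 4 (real n)) * x)
      / cpoly (Q n) (complex_of_real (root 4 (real n)) * x)) (\<lambda>x. 1) sequentially"
    using assms(4,5) by (intro uniform_limit_P_over_Q) (auto simp: root_4_four_thirds_squared)
  have "0 \<notin> K" using assms(5) by force
  then have limit_eq_1: "complex_of_real (root 4 12) * (x * phi (complex_of_real (root 4 (3/4)) * x)
      / (1 + (phi (complex_of_real (root 4 (3/4)) * x))\<^sup>2)) = 1" if "x \<in> K" for x
    using that by (intro freud_sobolev_limit_eq_1) auto
  have "?thesis \<longleftrightarrow> uniform_limit K (\<lambda>n x. cpoly (P n) (complex_of_real (root 4 (real n)) * x)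
      / cpoly (Q n) (complex_of_real (root 4 (real n)) * x)) (\<lambda>x. 1) sequentially"
    by (rule uniform_limit_cong') (rule refl, erule limit_eq_1)
  with limit show ?thesis by simp
qed

end
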